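(* Let $n\in\mathbb N$ and $i,j\in\{1,2\}$. (i) If $n$ is odd and $n\ge 17$, then $r(T_n^i,T_n^j)=2n-7$. (ii) If $n$ is even and $n\ge 12$, then $r(T_n^i,T_n^j)=2n-6$.
   Context: All graphs are finite and simple; a graph "contains" $H$ if it has a subgraph isomorphic to $H$. For graphs $G_1,G_2$, the Ramsey number $r(G_1,G_2)$ is the smallest positive integer $N$ such that for every graph $G$ on $N$ vertices, either $G$ contains a copy of $G_1$ or the complement $\overline G$ contains a copy of $G_2$. For $n\ge 5$, $T_n^1$ is the tree with vertex set $\{v_0,\ldots,v_{n-1}\}$ and edges $v_0v_1,\ldots,v_0v_{n-3},v_{n-4}v_{n-2},v_{n-3}v_{n-1}$, and $T_n^2$ is the tree on the same vertex set with edges $v_0v_1,\ldots,v_0v_{n-3},v_{n-3}v_{n-2},v_{n-3}v_{n-1}$. *)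

theory Defs
  imports Main
begin

type_synonym 'a graph = "'a set \<times> 'a set set"

definition simple_graph :: "'a graph \<Rightarrow> bool" where
  "simple_graph G \<longleftrightarrow> finite (fst G) \<and>
     (\<forall>e \<in> snd G. \<exists>u v. e = {u, v} \<and> u \<noteq> v \<and> u \<in> fst G \<and> v \<in> fst G)"

definition complement :: "'a graph \<Rightarrow> 'a graph" where
  "complement G = (fst G,
     {{u, v} | u v. u \<in> fst G \<and> v \<in> fst G \<and> u \<noteq> v \<and> {u, v} \<notin> snd G})"

definition contains :: "'a graph \<Rightarrow> 'b graph \<Rightarrow> bool" where
  "contains G H \<longleftrightarrow> (\<exists>f. inj_on f (fst H) \<and> f ` fst H \<subseteq> fst G \<and>
     (\<forall>u \<in> fst H. \<forall>v \<in> fst H. {u, v} \<in> snd H \<longrightarrow> {f u, f v} \<in> snd G))"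

text \<open>Ramsey number: least positive N such that every graph on N vertices contains G1
  or its complement contains G2. (Host graphs on nat vertices, which is no loss since
  containment is invariant under relabelling.)\<close>
definition ramsey_prop :: "'a graph \<Rightarrow> 'b graph \<Rightarrow> nat \<Rightarrow> bool" where
  "ramsey_prop G1 G2 N \<longleftrightarrow> (\<forall>G :: nat graph. simple_graph G \<and> card (fst G) = N \<longrightarrow>
      contains G G1 \<or> contains (complement G) G2)"

definition ramsey :: "'a graph \<Rightarrow> 'b graph \<Rightarrow> nat" where
  "ramsey G1 G2 = (LEAST N. N > 0 \<and> ramsey_prop G1 G2 N)"

definition tree1 :: "nat \<Rightarrow> nat graph" where
  "tree1 n = ({0..<n},
     {{0, k} | k. 1 \<le> k \<and> k \<le> n - 3} \<union> {{n - 4, n - 2}, {n - 3, n - 1}})"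

definition tree2 :: "nat \<Rightarrow> nat graph" where
  "tree2 n = ({0..<n},
     {{0, k} | k. 1 \<le> k \<and> k \<le> n - 3} \<union> {{n - 3, n - 2}, {n - 3, n - 1}})"

definition tree :: "nat \<Rightarrow> nat \<Rightarrow> nat graph" where
  "tree n i = (if i = 1 then tree1 n else tree2 n)"

end

theory Submission
  imports Defs
begin

(*
  Ramsey numbers of the trees T_n^1 and T_n^2: the star K_{1,n-3} centred at v_0 with
  leaves v_1..v_{n-3}, plus two pendant edges attached at two different leaves (T_n^1) or
  at the same leaf (T_n^2).

  A spider on n vertices has a vertex of degree n-3, so a graph in which
  both the graph and its complement have maximum degree at most n-4 contains neither tree.
  Such graphs exist on every N <= 2n-8 vertices (two disjoint cliques of size <= n-4) and,
  for even n, on every N <= 2n-7 vertices (induced subgraphs of an (n-4)-regular circulant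
  graph on 2n-7 vertices whose complement is again (n-4)-regular).

  If a graph G on at least 2n-7 vertices has a vertex v of degree at least
  n-3, then G contains T_n^i or its complement contains both trees (locale hub_setting:
  a case analysis on the edges between n-3 or n-2 neighbours of v and the rest of G).
  On 2n-6 vertices some vertex has degree >= n-3 in G or in its complement.  On 2n-7
  vertices the only alternative is that G is (n-4)-regular, which the handshake lemma
  rules out when n is odd since (2n-7)(n-4) is then odd.
*)

section \<open>Neighbourhoods and complements\<close>

definition nbhd :: "'a graph \<Rightarrow> 'a \<Rightarrow> 'a set" where
  "nbhd H c = {x \<in> fst H. {c, x} \<in> snd H}"

lemma simple_edge:
  assumes "simple_graph H" "{x, y} \<in> snd H"
  shows "x \<in> fst H \<and> y \<in> fst H \<and> x \<noteq> y"
proof -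
  obtain u v where "{x, y} = {u, v}" "u \<noteq> v" "u \<in> fst H" "v \<in> fst H"
    using assms unfolding simple_graph_def by blast
  then show ?thesis by (auto simp: doubleton_eq_iff)
qed

lemma simple_edgeE:
  assumes "simple_graph H" "e \<in> snd H"
  obtains u w where "e = {u, w}" "u \<noteq> w" "u \<in> fst H" "w \<in> fst H"
  using assms unfolding simple_graph_def by blast

lemma nbhd_subset: "nbhd H c \<subseteq> fst H"
  by (auto simp: nbhd_def)

lemma finite_nbhd: "simple_graph H \<Longrightarrow> finite (nbhd H c)"
  using nbhd_subset finite_subset unfolding simple_graph_def by metis

lemma nbhd_iff: "simple_graph H \<Longrightarrow> x \<in> nbhd H c \<longleftrightarrow> {c, x} \<in> snd H"
  unfolding nbhd_def using simple_edge[of H c x] by blast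

lemma nbhd_irrefl: "simple_graph H \<Longrightarrow> c \<notin> nbhd H c"
  using nbhd_iff simple_edge by fastforce

lemma complement_edge_iff:
  "{x, y} \<in> snd (complement G) \<longleftrightarrow> x \<in> fst G \<and> y \<in> fst G \<and> x \<noteq> y \<and> {x, y} \<notin> snd G"
  unfolding complement_def by (auto simp: doubleton_eq_iff insert_commute)

lemma fst_complement [simp]: "fst (complement G) = fst G"
  by (simp add: complement_def)

lemma nbhd_complement_iff:
  "y \<in> nbhd (complement G) x \<longleftrightarrow> x \<in> fst G \<and> y \<in> fst G \<and> x \<noteq> y \<and> {x, y} \<notin> snd G"
  by (auto simp: nbhd_def complement_edge_iff)

lemma simple_complement: "simple_graph G \<Longrightarrow> simple_graph (complement G)"
  unfolding simple_graph_def complement_def by auto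

lemma complement_complement:
  assumes "simple_graph G"
  shows "complement (complement G) = G"
proof -
  have "snd (complement (complement G)) = snd G"
  proof (intro set_eqI iffI)
    fix e assume "e \<in> snd (complement (complement G))"
    then show "e \<in> snd G"
      unfolding complement_def[of "complement G"] using complement_edge_iff[of _ _ G] by auto
  next
    fix e assume e: "e \<in> snd G"
    then obtain u v where "e = {u, v}" "u \<noteq> v" "u \<in> fst G" "v \<in> fst G"
      using assms unfolding simple_graph_def by blast
    then show "e \<in> snd (complement (complement G))"
      unfolding complement_def[of "complement G"] using complement_edge_iff[of u v G] e by auto
  qed
  then show ?thesis by (metis fst_complement prod.exhaust_sel)
qed

lemma nbhd_complement:
  "simple_graph G \<Longrightarrow> c \<in> fst G \<Longrightarrow> nbhd (complement G) c = fst G - {c} - nbhd G c"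
  using complement_edge_iff[of c _ G] simple_edge[of G] by (auto simp: nbhd_def)

text \<open>Every other vertex is a neighbour of v in exactly one of G and its complement, so the
  degrees of v in G and in the complement add up to |V| - 1.\<close>
lemma degree_plus_codegree:
  assumes G: "simple_graph G" and v: "v \<in> fst G"
  shows "card (nbhd G v) + card (nbhd (complement G) v) = card (fst G) - 1"
proof -
  have fin: "finite (fst G)" using G by (simp add: simple_graph_def)
  have sub: "nbhd G v \<subseteq> fst G - {v}" using nbhd_subset[of G v] nbhd_irrefl[OF G, of v] by blast
  have "card (nbhd (complement G) v) = card (fst G - {v}) - card (nbhd G v)"
    using nbhd_complement[OF G v] sub fin by (simp add: card_Diff_subset finite_subset)
  moreover have "card (nbhd G v) \<le> card (fst G - {v})" using sub fin by (intro card_mono) auto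
  ultimately show ?thesis using v fin by simp
qed

lemma obtain_two_distinct:
  assumes "2 \<le> card S"
  obtains x y where "x \<in> S" "y \<in> S" "x \<noteq> y"
  using assms by (force simp: numeral_2_eq_2 card_le_Suc_iff)

section \<open>Spiders: both trees as a star with two pendant edges\<close>

definition spider :: "nat \<Rightarrow> nat \<Rightarrow> nat \<Rightarrow> nat graph" where
  "spider n p q = ({0..<n}, {{0, k} | k. 1 \<le> k \<and> k \<le> n - 3} \<union> {{p, n - 2}, {q, n - 1}})"

lemma fst_spider [simp]: "fst (spider n p q) = {0..<n}"
  by (simp add: spider_def)

lemma tree1_spider: "tree1 n = spider n (n - 4) (n - 3)"
  by (simp add: tree1_def spider_def)

lemma tree2_spider: "tree2 n = spider n (n - 3) (n - 3)"
  by (simp add: tree2_def spider_def)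

lemma tree_spider: "i \<in> {1, 2} \<Longrightarrow> \<exists>p q. tree n i = spider n p q"
  using tree1_spider tree2_spider by (auto simp: tree_def)

lemma injective_extension:
  assumes "finite R" "finite L" "card R \<le> card L" "inj_on s S" "L \<inter> s ` S = {}" "R \<inter> S = {}"
  obtains h where "inj_on h (S \<union> R)" "\<forall>x\<in>S. h x = s x" "h ` R \<subseteq> L"
proof -
  obtain g where g: "inj_on g R" "g ` R \<subseteq> L"
    using card_le_inj[of R L] assms(1-3) by auto
  define h where "h x = (if x \<in> S then s x else g x)" for x
  have "inj_on h S" using assms(4) by (simp add: h_def inj_on_def)
  moreover have "inj_on h R" using g(1) assms(6) by (auto simp: h_def inj_on_def)
  moreover have "h ` S \<inter> h ` R = {}" using g(2) assms(5,6) by (auto simp: h_def)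
  ultimately have "inj_on h (S \<union> R)" using assms(6) by (simp add: inj_on_Un Diff_triv Int_commute)
  moreover have "h ` R \<subseteq> L" using g(2) assms(6) by (auto simp: h_def)
  ultimately show ?thesis using that by (simp add: h_def)
qed

lemma spider_embed:
  fixes s :: "nat \<Rightarrow> 'a"
  assumes H: "simple_graph H" and pq: "p \<in> {1..n-3}" "q \<in> {1..n-3}"
    and inj: "inj_on s {0, p, q, n-2, n-1}"
    and edges: "{s 0, s p} \<in> snd H" "{s 0, s q} \<in> snd H"
      "{s p, s (n-2)} \<in> snd H" "{s q, s (n-1)} \<in> snd H"
    and L: "L \<subseteq> nbhd H (s 0) - s ` {0, p, q, n-2, n-1}" "card ({1..n-3} - {p, q}) \<le> card L"
  shows "contains H (spider n p q)"
proof -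
  let ?S = "{0, p, q, n-2, n-1}" and ?R = "{1..n-3} - {p, q}"
  have "finite L" using L(1) finite_nbhd[OF H] finite_subset by blast
  moreover have "L \<inter> s ` ?S = {}" "?R \<inter> ?S = {}" using L(1) pq by auto
  ultimately obtain h where h: "inj_on h (?S \<union> ?R)" "\<forall>x\<in>?S. h x = s x" "h ` ?R \<subseteq> L"
    using injective_extension[of ?R L s ?S] L(2) inj by blast
  have dom: "?S \<union> ?R = {0..<n}" using pq by auto
  have hS: "h 0 = s 0" "h p = s p" "h q = s q" "h (n-2) = s (n-2)" "h (n-1) = s (n-1)"
    using h(2) by auto
  have leg: "{h 0, h k} \<in> snd H" if "1 \<le> k" "k \<le> n - 3" for k
  proof (cases "k \<in> {p, q}")
    case True
    then show ?thesis using edges hS by auto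
  next
    case False
    then have "k \<in> ?R" using that by auto
    then have "h k \<in> nbhd H (s 0)" using h(3) L(1) by blast
    then show ?thesis using nbhd_iff[OF H] hS by auto
  qed
  have pendant: "{h p, h (n-2)} \<in> snd H" "{h q, h (n-1)} \<in> snd H"
    using edges hS by auto
  have vertices: "h ` {0..<n} \<subseteq> fst H"
  proof -
    have "s 0 \<in> fst H" "s p \<in> fst H" "s q \<in> fst H" "s (n-2) \<in> fst H" "s (n-1) \<in> fst H"
      using simple_edge[OF H edges(3)] simple_edge[OF H edges(4)] simple_edge[OF H edges(1)]
      by auto
    then have "h ` ?S \<subseteq> fst H" using hS by auto
    moreover have "h ` ?R \<subseteq> fst H" using h(3) L(1) nbhd_subset[of H "s 0"] by blast
    ultimately show ?thesis using dom by blast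
  qed
  have edge_map: "{h u, h w} \<in> snd H" if "{u, w} \<in> snd (spider n p q)" for u w
  proof -
    from that consider k where "1 \<le> k" "k \<le> n - 3" "{u, w} = {0, k}"
      | "{u, w} = {p, n-2}" | "{u, w} = {q, n-1}"
      unfolding spider_def snd_conv Un_iff insert_iff empty_iff mem_Collect_eq by blast
    then show ?thesis
    proof cases
      case (1 k)
      then have "{h u, h w} = {h 0, h k}" by (auto simp: doubleton_eq_iff)
      then show ?thesis using leg 1 by simp
    next
      case 2
      then have "{h u, h w} = {h p, h (n-2)}" by (auto simp: doubleton_eq_iff)
      then show ?thesis using pendant by simp
    next
      case 3
      then have "{h u, h w} = {h q, h (n-1)}" by (auto simp: doubleton_eq_iff)
      then show ?thesis using pendant by simp
    qed
  qed
  show ?thesis unfolding contains_def fst_spider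
  proof (intro exI[of _ h] conjI ballI impI)
    show "inj_on h {0..<n}" using h(1) unfolding dom .
    show "h ` {0..<n} \<subseteq> fst H" by (fact vertices)
  qed (rule edge_map)
qed

lemma contains_tree1:
  assumes H: "simple_graph H" and n: "n \<ge> 5"
    and edges: "{c, a1} \<in> snd H" "{c, a2} \<in> snd H" "{a1, x1} \<in> snd H" "{a2, x2} \<in> snd H"
    and distinct: "a1 \<noteq> a2" "c \<noteq> x1" "c \<noteq> x2" "a1 \<noteq> x2" "a2 \<noteq> x1" "x1 \<noteq> x2"
    and L: "L \<subseteq> nbhd H c - {a1, a2, x1, x2}" "n - 5 \<le> card L"
  shows "contains H (tree1 n)"
proof -
  define s where "s k = (if k = 0 then c else if k = n-4 then a1 else if k = n-3 then a2
      else if k = n-2 then x1 else x2)" for k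
  have vals: "s 0 = c" "s (n-4) = a1" "s (n-3) = a2" "s (n-2) = x1" "s (n-1) = x2"
    using n unfolding s_def by (simp_all, arith+)
  have "c \<noteq> a1" "c \<noteq> a2" "a1 \<noteq> x1" "a2 \<noteq> x2"
    using simple_edge[OF H edges(1)] simple_edge[OF H edges(2)]
      simple_edge[OF H edges(3)] simple_edge[OF H edges(4)] by simp_all
  then have "distinct [c, a1, a2, x1, x2]" using distinct by simp
  then have "distinct (map s [0, n-4, n-3, n-2, n-1])" using vals by simp
  then have "inj_on s (set [0, n-4, n-3, n-2, n-1])" by (metis distinct_map)
  then have inj: "inj_on s {0, n-4, n-3, n-2, n-1}" by simp
  have leaves: "{1..n-3} - {n-4, n-3} = {1..n-5}" using n by auto
  show ?thesis unfolding tree1_spider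
  proof (rule spider_embed[OF H _ _ inj])
    show "n-4 \<in> {1..n-3}" "n-3 \<in> {1..n-3}" using n by auto
    show "{s 0, s (n-4)} \<in> snd H" "{s 0, s (n-3)} \<in> snd H"
      "{s (n-4), s (n-2)} \<in> snd H" "{s (n-3), s (n-1)} \<in> snd H"
      using edges vals by simp_all
    show "L \<subseteq> nbhd H (s 0) - s ` {0, n-4, n-3, n-2, n-1}" using L(1) vals nbhd_irrefl[OF H, of c] by auto
    show "card ({1..n-3} - {n-4, n-3}) \<le> card L" using L(2) leaves by simp
  qed
qed

lemma contains_tree2:
  assumes H: "simple_graph H" and n: "n \<ge> 5"
    and edges: "{c, a} \<in> snd H" "{a, x1} \<in> snd H" "{a, x2} \<in> snd H"
    and distinct: "c \<noteq> x1" "c \<noteq> x2" "x1 \<noteq> x2"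
    and L: "L \<subseteq> nbhd H c - {a, x1, x2}" "n - 4 \<le> card L"
  shows "contains H (tree2 n)"
proof -
  define s where "s k = (if k = 0 then c else if k = n-3 then a else if k = n-2 then x1 else x2)" for k
  have vals: "s 0 = c" "s (n-3) = a" "s (n-2) = x1" "s (n-1) = x2"
    using n unfolding s_def by (simp_all, arith+)
  have "c \<noteq> a" "a \<noteq> x1" "a \<noteq> x2"
    using simple_edge[OF H edges(1)] simple_edge[OF H edges(2)] simple_edge[OF H edges(3)]
    by simp_all
  then have "distinct [c, a, x1, x2]" using distinct by simp
  then have "distinct (map s [0, n-3, n-2, n-1])" using vals by simp
  then have "inj_on s (set [0, n-3, n-2, n-1])" by (metis distinct_map)
  then have inj: "inj_on s {0, n-3, n-3, n-2, n-1}" by simp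
  have leaves: "{1..n-3} - {n-3, n-3} = {1..n-4}" using n by auto
  show ?thesis unfolding tree2_spider
  proof (rule spider_embed[OF H _ _ inj])
    show "n-3 \<in> {1..n-3}" "n-3 \<in> {1..n-3}" using n by auto
    show "{s 0, s (n-3)} \<in> snd H" "{s 0, s (n-3)} \<in> snd H"
      "{s (n-3), s (n-2)} \<in> snd H" "{s (n-3), s (n-1)} \<in> snd H"
      using edges vals by simp_all
    show "L \<subseteq> nbhd H (s 0) - s ` {0, n-3, n-3, n-2, n-1}" using L(1) vals nbhd_irrefl[OF H, of c] by auto
    show "card ({1..n-3} - {n-3, n-3}) \<le> card L" using L(2) leaves by simp
  qed
qed

text \<open>The image of the centre of a spider has degree at least n-3.\<close>
lemma spider_needs_large_degree:
  assumes H: "simple_graph H" and n: "0 < n" and T: "contains H (spider n p q)"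
  shows "\<exists>c\<in>fst H. n - 3 \<le> card (nbhd H c)"
proof -
  obtain f where f: "inj_on f {0..<n}" "f ` {0..<n} \<subseteq> fst H"
    "\<forall>u\<in>{0..<n}. \<forall>w\<in>{0..<n}. {u, w} \<in> snd (spider n p q) \<longrightarrow> {f u, f w} \<in> snd H"
    using T unfolding contains_def fst_spider by blast
  have "f ` {1..n-3} \<subseteq> nbhd H (f 0)"
  proof
    fix y assume "y \<in> f ` {1..n-3}"
    then obtain k where k: "k \<in> {1..n-3}" "y = f k" by auto
    then have "{0, k} \<in> snd (spider n p q)" unfolding spider_def by auto
    then have "{f 0, f k} \<in> snd H" using f(3) k n by auto
    then show "y \<in> nbhd H (f 0)" using k nbhd_iff[OF H] by auto
  qed
  moreover have "card (f ` {1..n-3}) = n - 3"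
    using card_image[OF inj_on_subset[OF f(1)], of "{1..n-3}"] by fastforce
  ultimately have "n - 3 \<le> card (nbhd H (f 0))"
    using finite_nbhd[OF H] by (metis card_mono)
  moreover have "f 0 \<in> fst H" using f(2) n by auto
  ultimately show ?thesis by blast
qed

section \<open>Counting arguments\<close>

text \<open>Handshake lemma: in a finite simple graph the degrees sum to twice the number of edges;
  both sides count the incident vertex-edge pairs.\<close>
lemma degree_sum_even:
  assumes G: "simple_graph G"
  shows "even (\<Sum>v\<in>fst G. card (nbhd G v))"
proof -
  have fin: "finite (fst G)" using G by (simp add: simple_graph_def)
  have "snd G \<subseteq> Pow (fst G)" using G unfolding simple_graph_def by auto
  then have finE: "finite (snd G)" using fin by (meson finite_Pow_iff finite_subset)
  have degree: "card (nbhd G v) = card {e\<in>snd G. v \<in> e}" for v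
  proof -
    have "(\<lambda>x. {v, x}) ` nbhd G v = {e\<in>snd G. v \<in> e}"
    proof (intro equalityI subsetI)
      fix e assume "e \<in> (\<lambda>x. {v, x}) ` nbhd G v"
      then show "e \<in> {e\<in>snd G. v \<in> e}" using nbhd_iff[OF G] by auto
    next
      fix e assume e: "e \<in> {e\<in>snd G. v \<in> e}"
      then obtain x y where "e = {x, y}" using simple_edgeE[OF G] by blast
      then obtain w where w: "e = {v, w}" using e by auto
      then have "w \<in> nbhd G v" using e nbhd_iff[OF G, of w v] by simp
      then show "e \<in> (\<lambda>x. {v, x}) ` nbhd G v" using w by blast
    qed
    moreover have "inj_on (\<lambda>x. {v, x}) (nbhd G v)"
      by (auto simp: inj_on_def doubleton_eq_iff)
    ultimately show ?thesis by (metis card_image)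
  qed
  have ends: "card {v\<in>fst G. v \<in> e} = 2" if e: "e \<in> snd G" for e
  proof -
    obtain u w where "e = {u, w}" "u \<noteq> w" "u \<in> fst G" "w \<in> fst G"
      using simple_edgeE[OF G e] by blast
    then have "{v\<in>fst G. v \<in> e} = {u, w}" by auto
    then show ?thesis using \<open>u \<noteq> w\<close> by simp
  qed
  have "(\<Sum>v\<in>fst G. card (nbhd G v)) = (\<Sum>v\<in>fst G. card {e\<in>snd G. v \<in> e})"
    by (simp only: degree)
  also have "\<dots> = 2 * card (snd G)"
    using fin finE ends by (intro sum_multicount) auto
  finally show ?thesis by simp
qed

lemma sparse_side_vertex:
  fixes R :: "'a \<Rightarrow> 'b \<Rightarrow> bool"
  assumes fin: "finite A" "finite B" and sparse: "\<forall>a\<in>A. card {b\<in>B. R a b} \<le> 1"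
    and small: "card A < 2 * card B"
  shows "\<exists>b\<in>B. card {a\<in>A. R a b} \<le> 1"
proof (rule ccontr)
  assume "\<not> ?thesis"
  then have dense: "\<forall>b\<in>B. 2 \<le> card {a\<in>A. R a b}" by auto
  have "2 * card B = (\<Sum>b\<in>B. 2)" by simp
  also have "\<dots> \<le> (\<Sum>b\<in>B. card {a\<in>A. R a b})"
    using dense by (intro sum_mono) blast
  also have "\<dots> = (\<Sum>a\<in>A. card {b\<in>B. R a b})"
    using fin by (intro sum_multicount_gen[symmetric]) auto
  also have "\<dots> \<le> (\<Sum>a\<in>A. 1)"
    using sparse by (intro sum_mono) blast
  also have "\<dots> = card A" by simp
  finally show False using small by simp
qed

lemma intersecting_edges_form_star:
  assumes "\<forall>a1\<in>A. \<forall>a2\<in>A. \<forall>b1\<in>B. \<forall>b2\<in>B. R a1 b1 \<and> R a2 b2 \<longrightarrow> a1 = a2 \<or> b1 = b2"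
  shows "\<exists>a0 b0. \<forall>a\<in>A. \<forall>b\<in>B. R a b \<longrightarrow> a = a0 \<or> b = b0"
proof (cases "\<exists>a\<in>A. \<exists>b\<in>B. R a b")
  case True
  then obtain a1 b1 where ab: "a1 \<in> A" "b1 \<in> B" "R a1 b1" by blast
  show ?thesis
  proof (cases "\<exists>b\<in>B. b \<noteq> b1 \<and> R a1 b")
    case True
    then have "\<forall>a\<in>A. \<forall>b\<in>B. R a b \<longrightarrow> a = a1" using assms ab by metis
    then show ?thesis by blast
  next
    case False
    then have "\<forall>a\<in>A. \<forall>b\<in>B. R a b \<longrightarrow> b = b1" using assms ab by metis
    then show ?thesis by blast
  qed
qed blast

section \<open>The upper bound\<close>

lemma both_trees_from_hub:
  assumes H: "simple_graph H" and n: "n \<ge> 5"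
    and X: "X \<subseteq> nbhd H c" "X \<inter> Y = {}" "c \<notin> Y" "n - 3 \<le> card X"
    and pq: "p \<in> X" "q \<in> X" "p \<noteq> q"
    and deg: "2 \<le> card (nbhd H p \<inter> Y)" "2 \<le> card (nbhd H q \<inter> Y)"
  shows "contains H (tree1 n) \<and> contains H (tree2 n)"
proof
  have finX: "finite X" using X(1) finite_nbhd[OF H] finite_subset by blast
  have edges: "{c, p} \<in> snd H" "{c, q} \<in> snd H" using X(1) pq nbhd_iff[OF H] by auto
  obtain x1 x2 where x: "x1 \<in> nbhd H p \<inter> Y" "x2 \<in> nbhd H p \<inter> Y" "x1 \<noteq> x2"
    using deg(1) by (rule obtain_two_distinct)
  obtain y1 y2 where y12: "y1 \<in> nbhd H q \<inter> Y" "y2 \<in> nbhd H q \<inter> Y" "y1 \<noteq> y2"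
    using deg(2) by (rule obtain_two_distinct)
  obtain y where y: "y \<in> nbhd H q \<inter> Y" "y \<noteq> x1"
    using y12 by metis
  show "contains H (tree1 n)"
  proof (rule contains_tree1[OF H n edges])
    show "{p, x1} \<in> snd H" "{q, y} \<in> snd H" using x(1) y(1) nbhd_iff[OF H] by auto
    show "p \<noteq> q" "c \<noteq> x1" "c \<noteq> y" "p \<noteq> y" "q \<noteq> x1" "x1 \<noteq> y"
      using x(1) y pq X(2,3) by auto
    show "X - {p, q} \<subseteq> nbhd H c - {p, q, x1, y}" using X(1,2) x(1) y(1) by auto
    show "n - 5 \<le> card (X - {p, q})" using X(4) pq finX by (simp add: card_Diff_subset)
  qed
  show "contains H (tree2 n)"
  proof (rule contains_tree2[OF H n edges(1)])
    show "{p, x1} \<in> snd H" "{p, x2} \<in> snd H" using x nbhd_iff[OF H] by auto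
    show "c \<noteq> x1" "c \<noteq> x2" "x1 \<noteq> x2" using x X(3) by auto
    show "X - {p} \<subseteq> nbhd H c - {p, x1, x2}" using X(1,2) x by auto
    show "n - 4 \<le> card (X - {p})" using X(4) pq finX by simp
  qed
qed

text \<open>The set X0 is either empty or consists of v itself; in the latter case
  v must have no neighbour in B, which compensates for A having only n-3 elements.  The
  complement is referred to as the blue graph.\<close>
locale hub_setting =
  fixes G :: "'a graph" and n :: nat and v :: 'a and A X0 :: "'a set"
  assumes simple: "simple_graph G" and n: "12 \<le> n" and order: "2 * n - 7 \<le> card (fst G)"
    and v: "v \<in> fst G" and A: "A \<subseteq> nbhd G v" "n - 3 \<le> card A" "card A \<le> n - 2"
    and X0: "X0 \<subseteq> {v}" "n - 2 \<le> card A + card X0"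
    and X0_blue: "\<And>b w. b \<in> fst G - {v} - A \<Longrightarrow> w \<in> X0 \<Longrightarrow> {b, w} \<notin> snd G"
begin

definition B :: "'a set" where
  "B = fst G - {v} - A"

lemma finite_vertices: "finite (fst G)"
  using simple by (simp add: simple_graph_def)

lemma A_vertices: "A \<subseteq> fst G" and v_notin_A: "v \<notin> A"
  using A(1) nbhd_subset[of G v] nbhd_irrefl[OF simple, of v] by auto

lemma finite_A: "finite A" and finite_B: "finite B"
  using A_vertices finite_vertices finite_subset by (auto simp: B_def)

lemma finite_X0: "finite X0"
  using X0(1) finite_subset by blast

lemma B_vertices: "B \<subseteq> fst G" and disjoint: "A \<inter> B = {}" "X0 \<inter> A = {}" "X0 \<inter> B = {}"
  using X0(1) v_notin_A by (auto simp: B_def)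

lemma card_B: "n - 6 \<le> card B"
proof -
  have "card B = card (fst G - {v}) - card A"
    unfolding B_def using A_vertices v_notin_A finite_A by (intro card_Diff_subset) auto
  then show ?thesis using order A(3) v finite_vertices by simp
qed

lemma red_from_v: "a \<in> A \<Longrightarrow> {v, a} \<in> snd G"
  using A(1) nbhd_iff[OF simple] by blast

lemma blue_across:
  assumes "x \<in> A \<union> X0" "b \<in> B"
  shows "x \<in> nbhd (complement G) b \<longleftrightarrow> {x, b} \<notin> snd G"
    and "b \<in> nbhd (complement G) x \<longleftrightarrow> {x, b} \<notin> snd G"
proof -
  have "x \<in> fst G" "b \<in> fst G" "x \<noteq> b"
    using assms A_vertices B_vertices X0(1) v disjoint by auto
  then show "x \<in> nbhd (complement G) b \<longleftrightarrow> {x, b} \<notin> snd G"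
    and "b \<in> nbhd (complement G) x \<longleftrightarrow> {x, b} \<notin> snd G"
    by (auto simp: nbhd_complement_iff insert_commute)
qed

lemma X0_blue_to_B:
  assumes b: "b \<in> B"
  shows "X0 \<subseteq> nbhd (complement G) b"
proof
  fix w assume w: "w \<in> X0"
  have "{b, w} \<notin> snd G" using X0_blue b w unfolding B_def by blast
  then show "w \<in> nbhd (complement G) b" using blue_across(1)[of w b] w b by (simp add: insert_commute)
qed

text \<open>If two disjoint edges join A to B, then v is the centre of a T_n^1 in G.  Otherwise
  all edges between A and B meet a0 or b0, so a vertex b of B other than b0 is joined in
  blue to all of (A - {a0}) \<union> X0, and the vertices of A - {a0} are joined in blue to all
  of B - {b, b0}; hence b is a blue centre of both trees.\<close>
lemma tree1_or_blue_trees: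
  "contains G (tree1 n) \<or> (contains (complement G) (tree1 n) \<and> contains (complement G) (tree2 n))"
proof (cases "\<exists>a1\<in>A. \<exists>a2\<in>A. \<exists>b1\<in>B. \<exists>b2\<in>B.
    a1 \<noteq> a2 \<and> b1 \<noteq> b2 \<and> {a1, b1} \<in> snd G \<and> {a2, b2} \<in> snd G")
  case True
  then obtain a1 a2 b1 b2 where m: "a1 \<in> A" "a2 \<in> A" "a1 \<noteq> a2" "b1 \<in> B" "b2 \<in> B" "b1 \<noteq> b2"
    "{a1, b1} \<in> snd G" "{a2, b2} \<in> snd G" by blast
  have "contains G (tree1 n)"
  proof (rule contains_tree1[OF simple _ red_from_v red_from_v m(7,8)])
    show "5 \<le> n" using n by simp
    show "v \<noteq> b1" "v \<noteq> b2" "a1 \<noteq> b2" "a2 \<noteq> b1" using m disjoint by (auto simp: B_def)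
    show "A - {a1, a2} \<subseteq> nbhd G v - {a1, a2, b1, b2}" using A(1) m disjoint by auto
    show "n - 5 \<le> card (A - {a1, a2})" using A(2) m finite_A by (simp add: card_Diff_subset)
  qed (use m in auto)
  then show ?thesis ..
next
  case False
  then obtain a0 b0 where cover: "\<And>a b. a \<in> A \<Longrightarrow> b \<in> B \<Longrightarrow> {a, b} \<in> snd G \<Longrightarrow> a = a0 \<or> b = b0"
    using intersecting_edges_form_star[of A B "\<lambda>a b. {a, b} \<in> snd G"] by metis
  have "2 \<le> card B" using card_B n by simp
  then obtain b where b: "b \<in> B" "b \<noteq> b0" by (metis obtain_two_distinct)
  have "2 \<le> card (A - {a0})"
    using A(2) n finite_A by (cases "a0 \<in> A") (simp_all add: card_Diff_singleton)
  then obtain p q where pq: "p \<in> A - {a0}" "q \<in> A - {a0}" "p \<noteq> q" by (rule obtain_two_distinct)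
  define Y where "Y = B - {b, b0}"
  have "card B - card {b, b0} \<le> card Y"
    unfolding Y_def by (rule diff_card_le_card_Diff) simp
  moreover have "card {b, b0} \<le> 2" by (simp add: card_insert_le_m1)
  ultimately have "2 \<le> card Y" using card_B n by linarith
  moreover have "nbhd (complement G) x \<inter> Y = Y" if "x \<in> A - {a0}" for x
    using that cover blue_across(2) unfolding Y_def by blast
  ultimately have "contains (complement G) (tree1 n) \<and> contains (complement G) (tree2 n)"
  proof (intro both_trees_from_hub[OF simple_complement[OF simple], of n "(A - {a0}) \<union> X0" b Y p q])
    show "(A - {a0}) \<union> X0 \<subseteq> nbhd (complement G) b"
      using cover b blue_across(1) X0_blue_to_B by blast
    have "card ((A - {a0}) \<union> X0) = card (A - {a0}) + card X0"
      using disjoint finite_A X0(1) by (intro card_Un_disjoint) (auto simp: finite_subset)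
    then show "n - 3 \<le> card ((A - {a0}) \<union> X0)"
      using X0(2) finite_A by (cases "a0 \<in> A") (simp_all add: card_Diff_singleton)
  qed (use n pq disjoint b in \<open>auto simp: Y_def\<close>)
  then show ?thesis ..
qed

text \<open>If some vertex of A has two neighbours in B, then v is the centre of a T_n^2 in G.
  Otherwise double counting yields b in B with at most one neighbour in A; then b is joined
  in blue to at least n-3 vertices of A \<union> X0, each vertex of A has at most one neighbour in
  B - {b}, and b is a blue centre of both trees.\<close>
lemma tree2_or_blue_trees:
  "contains G (tree2 n) \<or> (contains (complement G) (tree1 n) \<and> contains (complement G) (tree2 n))"
proof (cases "\<exists>a\<in>A. \<exists>x1\<in>B. \<exists>x2\<in>B. x1 \<noteq> x2 \<and> {a, x1} \<in> snd G \<and> {a, x2} \<in> snd G")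
  case True
  then obtain a x1 x2 where m: "a \<in> A" "x1 \<in> B" "x2 \<in> B" "x1 \<noteq> x2"
    "{a, x1} \<in> snd G" "{a, x2} \<in> snd G" by blast
  have "contains G (tree2 n)"
  proof (rule contains_tree2[OF simple _ red_from_v[OF m(1)] m(5,6)])
    show "5 \<le> n" using n by simp
    show "v \<noteq> x1" "v \<noteq> x2" "x1 \<noteq> x2" using m by (auto simp: B_def)
    show "A - {a} \<subseteq> nbhd G v - {a, x1, x2}" using A(1) m disjoint by auto
    show "n - 4 \<le> card (A - {a})" using A(2) m finite_A by simp
  qed
  then show ?thesis ..
next
  case False
  define red where "red a = {b\<in>B. {a, b} \<in> snd G}" for a
  have sparse: "\<forall>a\<in>A. card (red a) \<le> 1"
  proof (rule ballI, rule ccontr)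
    fix a assume "a \<in> A" "\<not> card (red a) \<le> 1"
    then have "2 \<le> card (red a)" by simp
    then obtain x1 x2 where "x1 \<in> red a" "x2 \<in> red a" "x1 \<noteq> x2"
      by (rule obtain_two_distinct)
    then show False using False \<open>a \<in> A\<close> unfolding red_def by blast
  qed
  have "card A < 2 * card B" using A(3) card_B n by linarith
  then obtain b where b: "b \<in> B" "card {a\<in>A. {a, b} \<in> snd G} \<le> 1"
    using sparse_side_vertex[OF finite_A finite_B, of "\<lambda>a b. {a, b} \<in> snd G"] sparse
    unfolding red_def by blast
  define R where "R = {a\<in>A. {a, b} \<in> snd G}"
  define X where "X = (A - R) \<union> X0"
  define Y where "Y = B - {b}"
  have "card A - card R \<le> card (A - R)"
    by (rule diff_card_le_card_Diff) (use finite_A in \<open>simp add: R_def\<close>)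
  then have card_A_R: "card A - 1 \<le> card (A - R)" using b(2) unfolding R_def by linarith
  have "card X = card (A - R) + card X0"
    unfolding X_def using finite_A finite_X0 disjoint by (intro card_Un_disjoint) auto
  then have card_X: "n - 3 \<le> card X" using card_A_R X0(2) by linarith
  have "2 \<le> card (A - R)" using card_A_R A(2) n by linarith
  then obtain p q where pq: "p \<in> A - R" "q \<in> A - R" "p \<noteq> q" by (rule obtain_two_distinct)
  have card_Y: "n - 7 \<le> card Y" using card_B finite_B b(1) unfolding Y_def by simp
  have blue_into_Y: "2 \<le> card (nbhd (complement G) x \<inter> Y)" if x: "x \<in> A" for x
  proof -
    have "Y - red x \<subseteq> nbhd (complement G) x \<inter> Y"
      using x blue_across(2) unfolding Y_def red_def by auto
    then have "card (Y - red x) \<le> card (nbhd (complement G) x \<inter> Y)"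
      using finite_B by (intro card_mono) (auto simp: Y_def)
    moreover have "card Y - card (red x) \<le> card (Y - red x)"
      using finite_B by (intro diff_card_le_card_Diff) (simp add: red_def)
    ultimately show ?thesis using sparse x card_Y n by fastforce
  qed
  have "contains (complement G) (tree1 n) \<and> contains (complement G) (tree2 n)"
  proof (rule both_trees_from_hub[OF simple_complement[OF simple], of n X b Y p q])
    show "n - 3 \<le> card X" "p \<noteq> q" by (fact card_X, fact pq(3))
    show "p \<in> X" "q \<in> X" using pq(1,2) unfolding X_def by auto
    show "X \<subseteq> nbhd (complement G) b"
      using blue_across(1) b(1) X0_blue_to_B unfolding X_def R_def by blast
    show "X \<inter> Y = {}" "b \<notin> Y" using disjoint unfolding X_def Y_def by auto
    show "2 \<le> card (nbhd (complement G) p \<inter> Y)" "2 \<le> card (nbhd (complement G) q \<inter> Y)"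
      using blue_into_Y pq by auto
  qed (use n in simp)
  then show ?thesis ..
qed

end

lemma tree_or_cotree_at_large_degree:
  assumes G: "simple_graph G" and n: "12 \<le> n" and order: "2 * n - 7 \<le> card (fst G)"
    and v: "v \<in> fst G" and deg: "n - 3 \<le> card (nbhd G v)" and ij: "i \<in> {1, 2}" "j \<in> {1, 2}"
  shows "contains G (tree n i) \<or> contains (complement G) (tree n j)"
proof -
  obtain A X0 where "hub_setting G n v A X0"
  proof (cases "card (nbhd G v) = n - 3")
    case True
    have "hub_setting G n v (nbhd G v) {v}"
    proof
      show "{b, w} \<notin> snd G" if "b \<in> fst G - {v} - nbhd G v" "w \<in> {v}" for b w
        using that nbhd_iff[OF G, of b v] by (auto simp: insert_commute)
    qed (use G n order v True in auto)
    then show ?thesis by (rule that)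
  next
    case False
    then have "n - 2 \<le> card (nbhd G v)" using deg by linarith
    then obtain A where "A \<subseteq> nbhd G v" "card A = n - 2" by (meson obtain_subset_with_card_n)
    then have "hub_setting G n v A {}" by unfold_locales (use G n order v in auto)
    then show ?thesis by (rule that)
  qed
  then interpret hub_setting G n v A X0 .
  show ?thesis using tree1_or_blue_trees tree2_or_blue_trees ij by (auto simp: tree_def)
qed

text \<open>The same with the large degree in either colour, using that complementation is an
  involution.\<close>
lemma tree_or_cotree_at_vertex:
  assumes G: "simple_graph G" and n: "12 \<le> n" and order: "2 * n - 7 \<le> card (fst G)"
    and v: "v \<in> fst G" and ij: "i \<in> {1, 2}" "j \<in> {1, 2}"
    and deg: "n - 3 \<le> card (nbhd G v) \<or> n - 3 \<le> card (nbhd (complement G) v)"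
  shows "contains G (tree n i) \<or> contains (complement G) (tree n j)"
  using deg
proof
  assume "n - 3 \<le> card (nbhd G v)"
  then show ?thesis by (rule tree_or_cotree_at_large_degree[OF G n order v _ ij])
next
  assume "n - 3 \<le> card (nbhd (complement G) v)"
  then have "contains (complement G) (tree n j) \<or> contains (complement (complement G)) (tree n i)"
    using tree_or_cotree_at_large_degree[OF simple_complement[OF G] n _ _ _ ij(2,1)] order v by simp
  then show ?thesis using complement_complement[OF G] by auto
qed

text \<open>On 2n-7 vertices with n odd, a graph without a vertex of degree at least n-3 in
  either colour would be (n-4)-regular with an odd degree sum.\<close>
lemma ramsey_prop_odd:
  assumes n: "17 \<le> n" "odd n" and ij: "i \<in> {1, 2}" "j \<in> {1, 2}"
  shows "ramsey_prop (tree n i) (tree n j) (2 * n - 7)"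
  unfolding ramsey_prop_def
proof (intro allI impI, elim conjE)
  fix G :: "nat graph" assume G: "simple_graph G" and order: "card (fst G) = 2 * n - 7"
  show "contains G (tree n i) \<or> contains (complement G) (tree n j)"
  proof (cases "\<exists>v\<in>fst G. n - 3 \<le> card (nbhd G v) \<or> n - 3 \<le> card (nbhd (complement G) v)")
    case True
    then obtain v where "v \<in> fst G"
      "n - 3 \<le> card (nbhd G v) \<or> n - 3 \<le> card (nbhd (complement G) v)" by blast
    then show ?thesis using tree_or_cotree_at_vertex[OF G _ _ _ ij] n order by simp
  next
    case False
    have "card (nbhd G v) = n - 4" if "v \<in> fst G" for v
      using degree_plus_codegree[OF G that] False that order n by fastforce
    then have "(\<Sum>v\<in>fst G. card (nbhd G v)) = (2 * n - 7) * (n - 4)" using order by simp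
    moreover have "odd ((2 * n - 7) * (n - 4))" using n by simp
    ultimately show ?thesis using degree_sum_even[OF G] by simp
  qed
qed

text \<open>On 2n-6 vertices the degrees of a vertex in the two colours add up to 2n-7, so one
  of them is at least n-3.\<close>
lemma ramsey_prop_even:
  assumes n: "12 \<le> n" and ij: "i \<in> {1, 2}" "j \<in> {1, 2}"
  shows "ramsey_prop (tree n i) (tree n j) (2 * n - 6)"
  unfolding ramsey_prop_def
proof (intro allI impI, elim conjE)
  fix G :: "nat graph" assume G: "simple_graph G" and order: "card (fst G) = 2 * n - 6"
  obtain v where v: "v \<in> fst G" using order n by fastforce
  have "n - 3 \<le> card (nbhd G v) \<or> n - 3 \<le> card (nbhd (complement G) v)"
    using degree_plus_codegree[OF G v] order n by linarith
  then show "contains G (tree n i) \<or> contains (complement G) (tree n j)"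
    using tree_or_cotree_at_vertex[OF G n _ v ij] order by simp
qed

section \<open>The lower bound constructions\<close>

definition graph_on :: "nat \<Rightarrow> (nat \<Rightarrow> nat \<Rightarrow> bool) \<Rightarrow> nat graph" where
  "graph_on N P = ({0..<N}, {{u, w} | u w. u < N \<and> w < N \<and> u \<noteq> w \<and> P u w})"

lemma simple_graph_on: "simple_graph (graph_on N P)"
  unfolding simple_graph_def graph_on_def by auto

lemma fst_graph_on [simp]: "fst (graph_on N P) = {0..<N}"
  by (simp add: graph_on_def)

lemma nbhd_graph_on:
  assumes sym: "\<And>u w. P u w = P w u" and c: "c < N"
  shows "nbhd (graph_on N P) c = {x. x < N \<and> x \<noteq> c \<and> P c x}"
  using c sym unfolding nbhd_def graph_on_def by (auto simp: doubleton_eq_iff)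

lemma not_ramsey_prop_graph_on:
  assumes sym: "\<And>u w. P u w = P w u" and n: "4 \<le> n" and ij: "i \<in> {1, 2}" "j \<in> {1, 2}"
    and red: "\<And>c. c < N \<Longrightarrow> card {x. x < N \<and> x \<noteq> c \<and> P c x} \<le> n - 4"
    and blue: "\<And>c. c < N \<Longrightarrow> card {x. x < N \<and> x \<noteq> c \<and> \<not> P c x} \<le> n - 4"
  shows "\<not> ramsey_prop (tree n i) (tree n j) N"
proof -
  let ?G = "graph_on N P"
  have no_tree: "\<not> contains H (tree n k)"
    if H: "simple_graph H" "fst H = {0..<N}" and k: "k \<in> {1, 2}"
      and small: "\<And>c. c < N \<Longrightarrow> card (nbhd H c) \<le> n - 4" for H :: "nat graph" and k
  proof
    assume "contains H (tree n k)"
    then obtain p q where T: "contains H (spider n p q)" using tree_spider[OF k] by metis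
    have "0 < n" using n by simp
    from spider_needs_large_degree[OF H(1) this T]
    obtain c where "c \<in> fst H" "n - 3 \<le> card (nbhd H c)" by blast
    then show False using small[of c] H(2) n by fastforce
  qed
  have "\<not> contains ?G (tree n i)"
    using no_tree[OF simple_graph_on _ ij(1)] red nbhd_graph_on[OF sym] by simp
  moreover have "\<not> contains (complement ?G) (tree n j)"
  proof (rule no_tree[OF simple_complement[OF simple_graph_on] _ ij(2)])
    fix c assume c: "c < N"
    have "nbhd (complement ?G) c = {x. x < N \<and> x \<noteq> c \<and> \<not> P c x}"
      using nbhd_complement[OF simple_graph_on, of c N P] nbhd_graph_on[OF sym c] c by auto
    then show "card (nbhd (complement ?G) c) \<le> n - 4" using blue[OF c] by simp
  qed simp
  moreover have "simple_graph ?G" "card (fst ?G) = N" by (simp_all add: simple_graph_on)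
  ultimately show ?thesis unfolding ramsey_prop_def by blast
qed

lemma two_cliques_degrees:
  assumes N: "N \<le> 2 * m" and c: "c < N"
  shows "card {x. x < N \<and> x \<noteq> c \<and> (c < m \<longleftrightarrow> x < m)} \<le> m"
    and "card {x. x < N \<and> x \<noteq> c \<and> \<not> (c < m \<longleftrightarrow> x < m)} \<le> m"
proof -
  have low: "card S \<le> m" if "S \<subseteq> {0..<m}" for S
    using card_mono[OF finite_atLeastLessThan that] by simp
  have high: "card S \<le> m" if "S \<subseteq> {m..<N}" for S
    using card_mono[OF finite_atLeastLessThan that] N by simp
  show "card {x. x < N \<and> x \<noteq> c \<and> (c < m \<longleftrightarrow> x < m)} \<le> m"
    by (cases "c < m") (simp_all add: low high subset_eq)
  show "card {x. x < N \<and> x \<noteq> c \<and> \<not> (c < m \<longleftrightarrow> x < m)} \<le> m"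
    by (cases "c < m") (simp_all add: low high subset_eq)
qed

text \<open>The circulant graph on the cycle Z_M joining vertices at cyclic distance at most h,
  written with the ordinary distance d of the representatives: d <= h or d >= M - h.\<close>
definition circulant :: "nat \<Rightarrow> nat \<Rightarrow> nat \<Rightarrow> nat \<Rightarrow> bool" where
  "circulant M h u w \<longleftrightarrow> (let d = (if u \<le> w then w - u else u - w) in d \<le> h \<or> M - h \<le> d)"

lemma circulant_sym: "circulant M h u w = circulant M h w u"
  unfolding circulant_def Let_def by (cases "u \<le> w"; cases "w \<le> u") auto

lemma circulant_offset:
  assumes "x < M" "c < M" "x \<noteq> c"
  shows "circulant M h c x \<Longrightarrow> (if c \<le> x then x - c else x + M - c) \<in> {1..h} \<union> {M-h..<M}"
    and "\<not> circulant M h c x \<Longrightarrow> (if c \<le> x then x - c else x + M - c) \<in> {h+1..<M-h}"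
  using assms unfolding circulant_def Let_def by (cases "c \<le> x"; auto)+

lemma circulant_degrees:
  assumes N: "N \<le> M" and c: "c < N" and h: "2 * h < M"
  shows "card {x. x < N \<and> x \<noteq> c \<and> circulant M h c x} \<le> 2 * h"
    and "card {x. x < N \<and> x \<noteq> c \<and> \<not> circulant M h c x} \<le> M - 1 - 2 * h"
proof -
  define offset where "offset x = (if c \<le> x then x - c else x + M - c)" for x
  have inj: "inj_on offset {0..<M}"
    unfolding inj_on_def offset_def using c N by (auto split: if_splits)
  let ?S = "{x. x < N \<and> x \<noteq> c \<and> circulant M h c x}"
  let ?T = "{x. x < N \<and> x \<noteq> c \<and> \<not> circulant M h c x}"
  have card_S: "card ?S = card (offset ` ?S)" and card_T: "card ?T = card (offset ` ?T)"
    using N by (auto intro!: card_image[symmetric] inj_on_subset[OF inj])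
  have "offset ` ?S \<subseteq> {1..h} \<union> {M-h..<M}"
  proof
    fix y assume "y \<in> offset ` ?S"
    then obtain x where x: "x < N" "x \<noteq> c" "circulant M h c x" "y = offset x" by auto
    have "x < M" "c < M" using x(1) c N by auto
    from circulant_offset(1)[OF this x(2,3)] show "y \<in> {1..h} \<union> {M-h..<M}"
      using x(4) unfolding offset_def by simp
  qed
  then have "card ?S \<le> card ({1..h} \<union> {M-h..<M})" unfolding card_S by (intro card_mono) auto
  also have "\<dots> \<le> card {1..h} + card {M-h..<M}" by (rule card_Un_le)
  finally show "card ?S \<le> 2 * h" using h by simp
  have "offset ` ?T \<subseteq> {h+1..<M-h}"
  proof
    fix y assume "y \<in> offset ` ?T"
    then obtain x where x: "x < N" "x \<noteq> c" "\<not> circulant M h c x" "y = offset x" by auto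
    have "x < M" "c < M" using x(1) c N by auto
    from circulant_offset(2)[OF this x(2,3)] show "y \<in> {h+1..<M-h}"
      using x(4) unfolding offset_def by simp
  qed
  then have "card ?T \<le> card {h+1..<M-h}" unfolding card_T by (intro card_mono) auto
  then show "card ?T \<le> M - 1 - 2 * h" by simp
qed

lemma no_ramsey_prop_below_odd:
  assumes n: "5 \<le> n" and ij: "i \<in> {1, 2}" "j \<in> {1, 2}" and N: "N \<le> 2 * n - 8"
  shows "\<not> ramsey_prop (tree n i) (tree n j) N"
proof (rule not_ramsey_prop_graph_on[of "\<lambda>u w. u < n - 4 \<longleftrightarrow> w < n - 4", OF _ _ ij])
  show "4 \<le> n" using n by simp
  have "N \<le> 2 * (n - 4)" using N by simp
  from two_cliques_degrees[OF this]
  show "card {x. x < N \<and> x \<noteq> c \<and> (c < n - 4 \<longleftrightarrow> x < n - 4)} \<le> n - 4"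
    and "card {x. x < N \<and> x \<noteq> c \<and> \<not> (c < n - 4 \<longleftrightarrow> x < n - 4)} \<le> n - 4"
    if "c < N" for c
    using that by blast+
  show "(u < n - 4 \<longleftrightarrow> w < n - 4) = (w < n - 4 \<longleftrightarrow> u < n - 4)" for u w
    by blast
qed

lemma no_ramsey_prop_below_even:
  assumes n: "12 \<le> n" "even n" and ij: "i \<in> {1, 2}" "j \<in> {1, 2}" and N: "N \<le> 2 * n - 7"
  shows "\<not> ramsey_prop (tree n i) (tree n j) N"
proof (rule not_ramsey_prop_graph_on[OF circulant_sym _ ij])
  show "4 \<le> n" using n by simp
  define h where "h = (n - 4) div 2"
  have h: "2 * h = n - 4" "2 * h < 2 * n - 7" "2 * n - 7 - 1 - 2 * h = n - 4"
    using n unfolding h_def by auto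
  show "card {x. x < N \<and> x \<noteq> c \<and> circulant (2 * n - 7) ((n - 4) div 2) c x} \<le> n - 4"
    and "card {x. x < N \<and> x \<noteq> c \<and> \<not> circulant (2 * n - 7) ((n - 4) div 2) c x} \<le> n - 4"
    if "c < N" for c
    using circulant_degrees[OF N that h(2)] h(1,3) unfolding h_def by simp_all
qed

lemma ramsey_eqI:
  assumes "0 < N" "ramsey_prop G1 G2 N" "\<And>M. M < N \<Longrightarrow> \<not> ramsey_prop G1 G2 M"
  shows "ramsey G1 G2 = N"
  unfolding ramsey_def
  by (rule Least_equality) (use assms not_less in blast)+

theorem theorem4p1:
  fixes n i j :: nat
  assumes "i \<in> {1, 2}" and "j \<in> {1, 2}"
  shows "(odd n \<and> n \<ge> 17 \<longrightarrow> ramsey (tree n i) (tree n j) = 2 * n - 7) \<and>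
         (even n \<and> n \<ge> 12 \<longrightarrow> ramsey (tree n i) (tree n j) = 2 * n - 6)"
proof (intro conjI impI; elim conjE)
  assume "odd n" "n \<ge> 17"
  then show "ramsey (tree n i) (tree n j) = 2 * n - 7"
    using ramsey_prop_odd no_ramsey_prop_below_odd assms by (intro ramsey_eqI) auto
next
  assume "even n" "n \<ge> 12"
  then show "ramsey (tree n i) (tree n j) = 2 * n - 6"
    using ramsey_prop_even no_ramsey_prop_below_even assms by (intro ramsey_eqI) auto
qed

end
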